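(* Let $C\subset\mathbf{P}^2(\mathbf{C})$ be an irreducible plane curve of type $(d,d-2)$, with singular point $Q$ of multiplicity $d-2$, and let $T(C)=\{(p_1,q_1),\dots,(p_l,q_l)\}$ be its 2-formula. Then: (i) $\sum_{i=1}^l q_i=2\sum_{i=1}^l p_i+2$; (ii) for each $i$, either $p_i=q_i$ or $\min\{p_i,q_i\}$ is even; (iii) there exists $i$ such that $q_i$ is odd.
   Context: A plane curve of type $(d,\nu)$ is a plane curve of degree $d$ whose singular points have maximal multiplicity $\nu$. The 2-formula $T(C)$: choose homogeneous coordinates $(x,y,z)$ with $Q=(0:0:1)$, so that $C$ is given by $F(x,y)z^2+2G(x,y)z+H(x,y)=0$ with $F,G,H$ homogeneous of degrees $d-2,d-1,d$; put $\Delta=G^2-FH$; let $t_1,\dots,t_l\in\mathbf{P}^1$ be all the distinct roots of $F\Delta=0$ and set $(p_i,q_i)=(\mathrm{ord}_{t_i}F,\mathrm{ord}_{t_i}\Delta)$, the multiplicities of $t_i$ as a root of $F$ and of $\Delta$; then $T(C)=\{(p_1,q_1),\dots,(p_l,q_l)\}$. *)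

theory Defs
  imports "HOL-Computational_Algebra.Computational_Algebra"
begin

text \<open>A ternary form (homogeneous polynomial in x,y,z over the complex numbers) is represented as
  a nested univariate polynomial of type complex poly poly poly: the outermost variable is z,
  the middle one is y, the innermost one is x.  The coefficient of z^i y^j x^k of P is
  coeff (coeff (coeff P i) j) k.
  A binary form in x,y is a complex poly poly (outer variable y, inner variable x).\<close>

type_synonym tform = "complex poly poly poly"
type_synonym bform = "complex poly poly"

definition homogeneous3 :: "tform \<Rightarrow> nat \<Rightarrow> bool" where
  "homogeneous3 P d \<longleftrightarrow> P \<noteq> 0 \<and>
     (\<forall>i j k. coeff (coeff (coeff P i) j) k \<noteq> 0 \<longrightarrow> i + j + k = d)"

definition eval3 :: "tform \<Rightarrow> complex \<Rightarrow> complex \<Rightarrow> complex \<Rightarrow> complex" where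
  "eval3 P a b c = poly (poly (poly P [:[:c:]:]) [:b:]) a"

definition dz :: "tform \<Rightarrow> tform" where "dz P = pderiv P"
definition dy :: "tform \<Rightarrow> tform" where "dy P = map_poly pderiv P"
definition dx :: "tform \<Rightarrow> tform" where "dx P = map_poly (map_poly pderiv) P"

definition curve_mult :: "tform \<Rightarrow> complex \<Rightarrow> complex \<Rightarrow> complex \<Rightarrow> nat" where
  "curve_mult P a b c = (LEAST n. \<exists>i j l. i + j + l = n \<and>
      eval3 ((dx ^^ i) ((dy ^^ j) ((dz ^^ l) P))) a b c \<noteq> 0)"

text \<open>Points of P^1: Some t is (x:y) = (t:1), None is (1:0).  The linear form vanishing
  at the point: x - t y, resp. y.\<close>
definition linform :: "complex option \<Rightarrow> bform" where
  "linform p = (case p of None \<Rightarrow> [:0, 1:] | Some t \<Rightarrow> [:[:0, 1:], [:- t:]:])"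

definition ordP1 :: "complex option \<Rightarrow> bform \<Rightarrow> nat" where
  "ordP1 p f = (if f = 0 then 0 else GREATEST k. linform p ^ k dvd f)"

text \<open>The data F, G, H, Delta for Q = (0:0:1): P = F z^2 + 2 G z + H.\<close>
definition formF :: "tform \<Rightarrow> bform" where "formF P = coeff P 2"
definition formG :: "tform \<Rightarrow> bform" where "formG P = map_poly (smult (1/2)) (coeff P 1)"
definition formH :: "tform \<Rightarrow> bform" where "formH P = coeff P 0"
definition formDelta :: "tform \<Rightarrow> bform" where
  "formDelta P = formG P ^ 2 - formF P * formH P"

text \<open>The support of the 2-formula: distinct roots in P^1 of F * Delta.\<close>
definition roots2 :: "tform \<Rightarrow> complex option set" where
  "roots2 P = {t. 0 < ordP1 t (formF P * formDelta P)}"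

end

theory Submission
  imports Defs "HOL-Computational_Algebra.Field_as_Ring"
begin

text \<open>Write the curve as \<open>F z\<^sup>2 + 2 G z + H = 0\<close>, which is possible because the
  multiplicity \<open>d - 2\<close> at \<open>Q = (0:0:1)\<close> forces the degree in \<open>z\<close> to be 2.  The binary forms
  \<open>F\<close> and \<open>\<Delta> = G\<^sup>2 - F H\<close> have degrees \<open>d - 2\<close> and \<open>2d - 2\<close> and split into linear factors
  over \<open>\<complex>\<close>, so their orders on \<open>\<^bold>P\<^sup>1\<close> sum to these degrees; this is (i).  Irreducibility
  says that no linear form divides \<open>F\<close>, \<open>G\<close> and \<open>H\<close> at once, so at a root of \<open>F\<close> either \<open>G\<close>
  or \<open>H\<close> does not vanish; since orders behave like a valuation, comparing the orders of \<open>G\<^sup>2\<close>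
  and \<open>F H\<close> gives (ii).  Finally, if every order of \<open>\<Delta>\<close> were even, \<open>\<Delta>\<close> would be a square
  \<open>D\<^sup>2\<close> and \<open>F P = (F z + G - D)(F z + G + D)\<close> would contradict primality of \<open>P\<close>; this
  is (iii).\<close>

definition homogeneous2 :: "bform \<Rightarrow> nat \<Rightarrow> bool" where
  "homogeneous2 f n \<longleftrightarrow> (\<forall>j k. coeff (coeff f j) k \<noteq> 0 \<longrightarrow> j + k = n)"
\<comment> \<open>Unlike \<open>homogeneous3\<close>, this admits the zero form in every degree.\<close>

lemma homogeneous2_mult:
  assumes "homogeneous2 f a" "homogeneous2 g b"
  shows "homogeneous2 (f * g) (a + b)"
  unfolding homogeneous2_def
proof (intro allI impI)
  fix j k
  assume "coeff (coeff (f * g) j) k \<noteq> 0"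
  then obtain i l where "i \<le> j" "l \<le> k"
    "coeff (coeff f i) l \<noteq> 0" "coeff (coeff g (j - i)) (k - l) \<noteq> 0"
    by (auto simp: coeff_mult coeff_sum elim!: sum.not_neutral_contains_not_neutral)
  with assms show "j + k = a + b"
    unfolding homogeneous2_def by fastforce
qed

lemma homogeneous2_diff:
  "homogeneous2 f n \<Longrightarrow> homogeneous2 g n \<Longrightarrow> homogeneous2 (f - g) n"
  unfolding homogeneous2_def by (metis coeff_diff diff_self)

lemma homogeneous2_const: "homogeneous2 [:[:c:]:] 0"
  unfolding homogeneous2_def by (auto simp: coeff_pCons split: nat.splits)

lemma homogeneous2_linform: "homogeneous2 (linform p) 1"
  unfolding homogeneous2_def linform_def
  by (auto simp: coeff_pCons split: nat.splits option.splits)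

lemma homogeneous2_prod_linform:
  "homogeneous2 (prod_mset (image_mset linform L)) (size L)"
proof (induction L)
  case empty
  show ?case using homogeneous2_const[of 1] by (simp add: one_pCons)
next
  case (add p L)
  then show ?case
    using homogeneous2_mult[OF homogeneous2_linform add.IH] by (simp add: mult_ac)
qed

lemma homogeneous2_coeff_poly_1:
  assumes "homogeneous2 f n" "j + k = n"
  shows "coeff (poly f 1) k = coeff (coeff f j) k"
proof -
  have "coeff (poly f 1) k = (\<Sum>i\<le>degree f. coeff (coeff f i) k)"
    by (simp add: poly_altdef coeff_sum)
  also have "\<dots> = (\<Sum>i\<le>degree f. if i = j then coeff (coeff f j) k else 0)"
    using assms unfolding homogeneous2_def by (intro sum.cong) (auto, metis add_right_cancel)
  also have "\<dots> = coeff (coeff f j) k"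
    by (auto simp: coeff_eq_0)
  finally show ?thesis .
qed

lemma homogeneous2_eqI:
  assumes "homogeneous2 f n" "homogeneous2 g n" "poly f 1 = poly g 1"
  shows "f = g"
proof (intro poly_eqI)
  fix j k
  show "coeff (coeff f j) k = coeff (coeff g j) k"
    using homogeneous2_coeff_poly_1[OF assms(1), of j k] homogeneous2_coeff_poly_1[OF assms(2), of j k]
      assms unfolding homogeneous2_def by metis
qed

lemma homogeneous2_factor:
  assumes "homogeneous2 f n" "f \<noteq> 0"
  obtains c L where "c \<noteq> 0" "size L = n" "f = [:[:c:]:] * prod_mset (image_mset linform L)"
proof -
  define g where "g = poly f 1"
  have deg_g: "degree g \<le> n"
    using assms(1) unfolding g_def homogeneous2_def
    by (intro degree_le) (auto simp: poly_altdef coeff_sum intro!: sum.neutral)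
  obtain j where "coeff f j \<noteq> 0" using assms(2) by (metis leading_coeff_neq_0)
  then obtain k where k: "coeff (coeff f j) k \<noteq> 0" by (metis leading_coeff_neq_0)
  then have "j + k = n" using assms(1) unfolding homogeneous2_def by blast
  with k have "g \<noteq> 0"
    using homogeneous2_coeff_poly_1[OF assms(1)] unfolding g_def by force
  define L where "L = image_mset Some (proots g) + replicate_mset (n - degree g) None"
  define T where "T = [:[:lead_coeff g:]:] * prod_mset (image_mset linform L)"
  have size_L: "size L = n"
    unfolding L_def using deg_g by (simp add: size_proots_complex)
  have "homogeneous2 T n"
    unfolding T_def
    using homogeneous2_mult[OF homogeneous2_const homogeneous2_prod_linform, of _ L] size_L
    by simp
  moreover have "poly T 1 = g"
    unfolding T_def L_def
    by (simp add: poly_prod_mset image_mset.compositionality o_def linform_def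
        complex_poly_decompose_multiset)
  ultimately have "T = f"
    using homogeneous2_eqI[OF _ assms(1)] unfolding g_def by blast
  moreover have "lead_coeff g \<noteq> 0" using \<open>g \<noteq> 0\<close> by simp
  ultimately show ?thesis
    using that size_L unfolding T_def by blast
qed

definition eval_P1 :: "complex option \<Rightarrow> bform \<Rightarrow> complex" where
  "eval_P1 p f = (case p of Some t \<Rightarrow> poly (poly f 1) t | None \<Rightarrow> poly (poly f 0) 1)"

lemma eval_P1_mult: "eval_P1 p (f * g) = eval_P1 p f * eval_P1 p g"
  by (simp add: eval_P1_def split: option.splits)

lemma eval_P1_one: "eval_P1 p 1 = 1"
  by (simp add: eval_P1_def split: option.splits)

lemma eval_P1_smult_const [simp]: "eval_P1 p (smult [:c:] f) = c * eval_P1 p f"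
  by (simp add: eval_P1_def split: option.splits)

lemma eval_P1_linform_eq_0_iff: "eval_P1 p (linform q) = 0 \<longleftrightarrow> q = p"
  by (auto simp: eval_P1_def linform_def split: option.splits)

lemma eval_P1_eq_0_if_linform_dvd: "linform p dvd f \<Longrightarrow> eval_P1 p f = 0"
  by (auto simp: eval_P1_mult eval_P1_linform_eq_0_iff elim!: dvdE)

lemma linform_not_dvd_1: "\<not> linform p dvd 1"
  by (metis eval_P1_eq_0_if_linform_dvd eval_P1_one zero_neq_one)

lemma linform_nonzero: "linform p \<noteq> 0"
  by (simp add: linform_def split: option.splits)

lemma eval_P1_const_prod_linform_nonzero:
  assumes "c \<noteq> 0" "p \<notin># L"
  shows "eval_P1 p ([:[:c:]:] * prod_mset (image_mset linform L)) \<noteq> 0"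
  using assms(2)
proof (induction L)
  case empty
  then show ?case using assms(1) by (simp add: eval_P1_def split: option.splits)
next
  case (add q L)
  then show ?case by (auto simp: eval_P1_mult eval_P1_linform_eq_0_iff mult.left_commute)
qed

lemma linform_power_dvd_const_prod_iff:
  assumes "c \<noteq> 0"
  shows "linform p ^ k dvd [:[:c:]:] * prod_mset (image_mset linform L) \<longleftrightarrow> k \<le> count L p"
proof -
  define L' where "L' = filter_mset (\<lambda>q. q \<noteq> p) L"
  define R where "R = [:[:c:]:] * prod_mset (image_mset linform L')"
  have L: "L = replicate_mset (count L p) p + L'"
    unfolding L'_def by (metis filter_eq_replicate_mset multiset_partition)
  have factor: "[:[:c:]:] * prod_mset (image_mset linform L) = linform p ^ count L p * R"
    unfolding R_def by (subst L) (simp add: mult_ac)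
  have "eval_P1 p R \<noteq> 0"
    unfolding R_def L'_def by (rule eval_P1_const_prod_linform_nonzero[OF assms]) simp
  then have "\<not> linform p dvd R"
    using eval_P1_eq_0_if_linform_dvd by blast
  show ?thesis
  proof
    assume dvd: "linform p ^ k dvd [:[:c:]:] * prod_mset (image_mset linform L)"
    show "k \<le> count L p"
    proof (rule ccontr)
      assume "\<not> k \<le> count L p"
      then have "linform p ^ count L p * linform p dvd linform p ^ k"
        by (metis le_imp_power_dvd not_less_eq_eq power_Suc2)
      with dvd have "linform p ^ count L p * linform p dvd linform p ^ count L p * R"
        unfolding factor by (metis dvd_trans)
      with \<open>\<not> linform p dvd R\<close> show False
        using linform_nonzero by simp
    qed
  qed (unfold factor, intro dvd_mult2 le_imp_power_dvd)
qed

lemma ordP1_const_prod_linform: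
  assumes "c \<noteq> 0"
  shows "ordP1 p ([:[:c:]:] * prod_mset (image_mset linform L)) = count L p"
proof -
  have "[:[:c:]:] * prod_mset (image_mset linform L) \<noteq> 0"
    using assms linform_nonzero by (auto simp: prod_mset_zero_iff)
  then show ?thesis
    unfolding ordP1_def using linform_power_dvd_const_prod_iff[OF assms]
    by (auto intro!: Greatest_equality)
qed

lemma linform_power_dvd_iff_ordP1:
  assumes "homogeneous2 f n" "f \<noteq> 0"
  shows "linform p ^ k dvd f \<longleftrightarrow> k \<le> ordP1 p f"
  by (metis homogeneous2_factor[OF assms] linform_power_dvd_const_prod_iff ordP1_const_prod_linform)

lemma linform_dvd_iff_ordP1_pos:
  assumes "homogeneous2 f n" "f \<noteq> 0"
  shows "linform p dvd f \<longleftrightarrow> 0 < ordP1 p f"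
  using linform_power_dvd_iff_ordP1[OF assms, of p 1] by (simp add: Suc_le_eq)

lemma ordP1_mult:
  assumes "homogeneous2 f a" "f \<noteq> 0" "homogeneous2 g b" "g \<noteq> 0"
  shows "ordP1 p (f * g) = ordP1 p f + ordP1 p g"
proof -
  obtain c L where c: "c \<noteq> 0" "f = [:[:c:]:] * prod_mset (image_mset linform L)"
    using homogeneous2_factor[OF assms(1,2)] by metis
  obtain c' L' where c': "c' \<noteq> 0" "g = [:[:c':]:] * prod_mset (image_mset linform L')"
    using homogeneous2_factor[OF assms(3,4)] by metis
  have "f * g = [:[:c * c':]:] * prod_mset (image_mset linform (L + L'))"
    using c c' by (simp add: mult_ac)
  then show ?thesis
    using ordP1_const_prod_linform c c' by (metis count_union mult_eq_0_iff)
qed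

lemma ordP1_uminus: "ordP1 p (- f) = ordP1 p f"
  unfolding ordP1_def by simp

lemma finite_ordP1_support:
  assumes "homogeneous2 f n" "f \<noteq> 0"
  shows "finite {p. 0 < ordP1 p f}"
proof -
  obtain c L where "c \<noteq> 0" "f = [:[:c:]:] * prod_mset (image_mset linform L)"
    using homogeneous2_factor[OF assms] by metis
  then have "{p. 0 < ordP1 p f} = set_mset L"
    using ordP1_const_prod_linform by auto
  then show ?thesis by simp
qed

lemma sum_ordP1_eq_degree:
  assumes "homogeneous2 f n" "f \<noteq> 0" "finite A" "{p. 0 < ordP1 p f} \<subseteq> A"
  shows "(\<Sum>p\<in>A. ordP1 p f) = n"
proof -
  obtain c L where c: "c \<noteq> 0" "size L = n" "f = [:[:c:]:] * prod_mset (image_mset linform L)"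
    using homogeneous2_factor[OF assms(1,2)] by metis
  then have ord: "ordP1 p f = count L p" for p
    using ordP1_const_prod_linform by simp
  have "(\<Sum>p\<in>A. count L p) = (\<Sum>p\<in>set_mset L. count L p)"
    using assms(3,4) unfolding ord by (intro sum.mono_neutral_right) (auto simp: not_in_iff)
  then show ?thesis
    using c(2) unfolding ord by (simp add: size_multiset_overloaded_eq)
qed

lemma multiset_even_count_double:
  assumes "\<And>x. even (count L x)"
  obtains M where "L = M + M"
proof
  define M where "M = Abs_multiset (\<lambda>x. count L x div 2)"
  have "finite {x. 0 < count L x div 2}"
    by (rule finite_subset[of _ "set_mset L"]) (auto, metis count_eq_zero_iff div_0 less_irrefl)
  then have count_M: "count M x = count L x div 2" for x
    unfolding M_def by (simp add: count_Abs_multiset)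
  show "L = M + M"
  proof (rule multiset_eqI)
    fix x
    show "count L x = count (M + M) x"
      using assms[of x] count_M[of x] by (auto elim!: evenE)
  qed
qed

lemma homogeneous2_square_if_even_ordP1:
  assumes "homogeneous2 f n" "f \<noteq> 0" "\<And>p. even (ordP1 p f)"
  obtains D where "f = D * D"
proof -
  obtain c L where c: "c \<noteq> 0" "f = [:[:c:]:] * prod_mset (image_mset linform L)"
    using homogeneous2_factor[OF assms(1,2)] by metis
  then obtain M where M: "L = M + M"
    using assms(3) ordP1_const_prod_linform multiset_even_count_double by metis
  have "c = csqrt c * csqrt c"
    by (metis power2_csqrt power2_eq_square)
  then have "f = ([:[:csqrt c:]:] * prod_mset (image_mset linform M))
               * ([:[:csqrt c:]:] * prod_mset (image_mset linform M))"
    using c M by (simp add: mult_ac)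
  then show ?thesis using that by blast
qed

lemma ordP1_diff_ge_min:
  assumes "homogeneous2 f n" "homogeneous2 g n" "f - g \<noteq> 0"
  shows "min (ordP1 p f) (ordP1 p g) \<le> ordP1 p (f - g)"
proof (cases "f = 0 \<or> g = 0")
  case True
  then show ?thesis by (auto simp: ordP1_def)
next
  case False
  let ?m = "min (ordP1 p f) (ordP1 p g)"
  have "linform p ^ ?m dvd f" "linform p ^ ?m dvd g"
    using False linform_power_dvd_iff_ordP1 assms(1,2) by auto
  then have "linform p ^ ?m dvd f - g" by (rule dvd_diff)
  then show ?thesis
    using linform_power_dvd_iff_ordP1[OF homogeneous2_diff[OF assms(1,2)] assms(3)] by blast
qed

lemma ordP1_diff_eq_left:
  assumes hf: "homogeneous2 f n" and hg: "homogeneous2 g n" and "f \<noteq> 0"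
    and less: "ordP1 p f < ordP1 p g"
  shows "ordP1 p (f - g) = ordP1 p f"
proof -
  have "g \<noteq> 0" using less by (auto simp: ordP1_def)
  have "f - g \<noteq> 0" using less by auto
  have "\<not> linform p ^ Suc (ordP1 p f) dvd f - g"
  proof
    assume "linform p ^ Suc (ordP1 p f) dvd f - g"
    moreover have "linform p ^ Suc (ordP1 p f) dvd g"
      using linform_power_dvd_iff_ordP1[OF hg \<open>g \<noteq> 0\<close>] less by (simp del: power_Suc)
    ultimately have "linform p ^ Suc (ordP1 p f) dvd f"
      by (metis diff_add_cancel dvd_add)
    then show False
      using linform_power_dvd_iff_ordP1[OF hf \<open>f \<noteq> 0\<close>] by (simp del: power_Suc)
  qed
  then have "ordP1 p (f - g) \<le> ordP1 p f"
    using linform_power_dvd_iff_ordP1[OF homogeneous2_diff[OF hf hg] \<open>f - g \<noteq> 0\<close>, of p]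
    by (simp del: power_Suc)
  with ordP1_diff_ge_min[OF hf hg \<open>f - g \<noteq> 0\<close>, of p] less show ?thesis by simp
qed

lemma ordP1_diff_eq_min:
  assumes "homogeneous2 f n" "homogeneous2 g n" "f \<noteq> 0" "g \<noteq> 0"
    and "ordP1 p f \<noteq> ordP1 p g"
  shows "ordP1 p (f - g) = min (ordP1 p f) (ordP1 p g)"
proof (cases "ordP1 p f < ordP1 p g")
  case True
  then show ?thesis using ordP1_diff_eq_left[OF assms(1-3)] by simp
next
  case False
  then have "ordP1 p (g - f) = ordP1 p g"
    using ordP1_diff_eq_left[OF assms(2,1,4)] assms(5) by simp
  moreover have "ordP1 p (f - g) = ordP1 p (g - f)"
    by (metis minus_diff_eq ordP1_uminus)
  ultimately show ?thesis
    using False by simp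
qed

text \<open>The order bookkeeping behind (ii): \<open>g, f, h\<close> are the orders of \<open>G, F, H\<close> at a root
  of \<open>F\<close> where \<open>G\<close> or \<open>H\<close> does not vanish, and \<open>\<delta>\<close> is the order of \<open>G\<^sup>2 - F H\<close>.\<close>

lemma discriminant_order_cases:
  fixes f g h \<delta> :: nat
  assumes "0 < f" and "g = 0 \<or> h = 0"
    and ge: "min (2 * g) (f + h) \<le> \<delta>"
    and eq: "2 * g \<noteq> f + h \<Longrightarrow> \<delta> = min (2 * g) (f + h)"
  shows "f = \<delta> \<or> even (min f \<delta>)"
proof (cases "g = 0")
  case True
  then show ?thesis using eq \<open>0 < f\<close> by simp
next
  case False
  with assms(2) have "h = 0" by simp
  consider "2 * g < f" | "2 * g = f" | "f < 2 * g" by linarith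
  then show ?thesis
  proof cases
    case 1
    then have "min f \<delta> = 2 * g" using eq \<open>h = 0\<close> by simp
    then show ?thesis by simp
  next
    case 2
    then have "min f \<delta> = 2 * g" using ge \<open>h = 0\<close> by simp
    then show ?thesis by simp
  next
    case 3
    then show ?thesis using eq \<open>h = 0\<close> by simp
  qed
qed

lemma ordP1_discriminant:
  fixes F G H :: bform
  assumes hF: "homogeneous2 F a" and hG: "homogeneous2 G b" and hH: "homogeneous2 H c"
    and deg: "a + c = b + b" and "F \<noteq> 0" and disc: "G * G - F * H \<noteq> 0"
    and no_common_root: "\<not> (linform t dvd F \<and> linform t dvd G \<and> linform t dvd H)"
  shows "ordP1 t F = ordP1 t (G * G - F * H)
           \<or> even (min (ordP1 t F) (ordP1 t (G * G - F * H)))"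
proof -
  have FH: "homogeneous2 (F * H) (b + b)"
    using homogeneous2_mult[OF hF hH] deg by simp
  have GG: "homogeneous2 (G * G) (b + b)"
    by (rule homogeneous2_mult[OF hG hG])
  have root_F: "linform t dvd F \<longleftrightarrow> 0 < ordP1 t F"
    by (rule linform_dvd_iff_ordP1_pos[OF hF \<open>F \<noteq> 0\<close>])
  consider "ordP1 t F = 0" | "G = 0" | "H = 0" | "0 < ordP1 t F" "G \<noteq> 0" "H \<noteq> 0"
    by blast
  then show ?thesis
  proof cases
    case 1
    then show ?thesis by simp
  next
    case 2
    then have "H \<noteq> 0" using disc by auto
    then have "ordP1 t H = 0 \<or> ordP1 t F = 0"
      using no_common_root root_F linform_dvd_iff_ordP1_pos[OF hH] 2 by auto
    then show ?thesis
      using 2 ordP1_mult[OF hF \<open>F \<noteq> 0\<close> hH \<open>H \<noteq> 0\<close>] ordP1_uminus[of t "F * H"] by auto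
  next
    case 3
    then have "G \<noteq> 0" using disc by auto
    then have "ordP1 t G = 0 \<or> ordP1 t F = 0"
      using no_common_root root_F linform_dvd_iff_ordP1_pos[OF hG] 3 by auto
    then show ?thesis
      using 3 ordP1_mult[OF hG \<open>G \<noteq> 0\<close> hG \<open>G \<noteq> 0\<close>] by auto
  next
    case 4
    have ord_GG: "ordP1 t (G * G) = 2 * ordP1 t G"
      using ordP1_mult[OF hG _ hG] 4 by simp
    have ord_FH: "ordP1 t (F * H) = ordP1 t F + ordP1 t H"
      using ordP1_mult[OF hF \<open>F \<noteq> 0\<close> hH] 4 by simp
    show ?thesis
    proof (rule discriminant_order_cases)
      show "ordP1 t G = 0 \<or> ordP1 t H = 0"
        using no_common_root root_F 4 linform_dvd_iff_ordP1_pos[OF hG] linform_dvd_iff_ordP1_pos[OF hH]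
        by auto
      show "min (2 * ordP1 t G) (ordP1 t F + ordP1 t H) \<le> ordP1 t (G * G - F * H)"
        using ordP1_diff_ge_min[OF GG FH disc, of t] unfolding ord_GG ord_FH .
      show "ordP1 t (G * G - F * H) = min (2 * ordP1 t G) (ordP1 t F + ordP1 t H)"
        if "2 * ordP1 t G \<noteq> ordP1 t F + ordP1 t H"
        using ordP1_diff_eq_min[OF GG FH, of t] 4 \<open>F \<noteq> 0\<close> that unfolding ord_GG ord_FH by simp
    qed (use 4 in simp)
  qed
qed

lemma coeff_coeff_dx_funpow: "coeff (coeff ((dx ^^ a) Q) m) j = (pderiv ^^ a) (coeff (coeff Q m) j)"
  by (induction a) (simp_all add: dx_def coeff_map_poly)

lemma coeff_dy_funpow: "coeff ((dy ^^ b) Q) m = (pderiv ^^ b) (coeff Q m)"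
  by (induction b) (simp_all add: dy_def coeff_map_poly)

lemma dz_funpow: "dz ^^ l = pderiv ^^ l"
  by (simp add: dz_def[abs_def])

lemma pochhammer_of_nat_poly:
  "pochhammer (of_nat n :: 'a::comm_semiring_1 poly) l = [:pochhammer (of_nat n) l:]"
  by (induction l) (simp_all add: pochhammer_Suc of_nat_poly mult.commute)

lemma coeff_000_derivs:
  "coeff (coeff (coeff ((dx ^^ a) ((dy ^^ b) ((dz ^^ l) P))) m) 0) 0 =
     pochhammer 1 a * pochhammer 1 b * pochhammer (of_nat (Suc m)) l * coeff (coeff (coeff P (m + l)) b) a"
proof -
  have one: "of_nat (Suc 0) = (1 :: complex)" by simp
  show ?thesis
    by (simp add: one coeff_coeff_dx_funpow coeff_dy_funpow dz_funpow coeff_higher_pderiv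
        pochhammer_of_nat_poly del: of_nat_Suc)
qed

lemma eval3_001: "eval3 Q 0 0 1 = (\<Sum>m\<le>degree Q. coeff (coeff (coeff Q m) 0) 0)"
proof -
  have "eval3 Q 0 0 1 = coeff (coeff (poly Q 1) 0) 0"
    by (simp add: eval3_def poly_0_coeff_0 one_pCons[symmetric])
  then show ?thesis
    by (simp add: poly_altdef coeff_sum)
qed

lemma pochhammer_1_nonzero: "pochhammer (1::complex) a \<noteq> 0"
  by (metis pochhammer_fact fact_nonzero)

text \<open>At \<open>(0:0:1)\<close> a partial derivative only sees the coefficients of the matching monomial
  in \<open>x\<close> and \<open>y\<close>; homogeneity leaves a single monomial.\<close>

lemma coeff_nonzero_if_eval3_001_derivs:
  assumes "eval3 ((dx ^^ a) ((dy ^^ b) ((dz ^^ l) P))) 0 0 1 \<noteq> 0"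
  obtains i where "coeff (coeff (coeff P i) b) a \<noteq> 0"
  using assms unfolding eval3_001 coeff_000_derivs
  by (auto elim!: sum.not_neutral_contains_not_neutral)

lemma eval3_001_derivs_nonzero_if_coeff:
  assumes hom: "homogeneous3 P d" and nz: "coeff (coeff (coeff P i) j) k \<noteq> 0"
  shows "eval3 ((dx ^^ k) ((dy ^^ j) ((dz ^^ 0) P))) 0 0 1 \<noteq> 0"
proof -
  define Q where "Q = (dx ^^ k) ((dy ^^ j) ((dz ^^ 0) P))"
  have coeff_Q: "coeff (coeff (coeff Q m) 0) 0
      = pochhammer 1 k * pochhammer 1 j * coeff (coeff (coeff P m) j) k" for m
    unfolding Q_def using coeff_000_derivs[of k j 0 P m] by simp
  have "coeff (coeff (coeff Q i) 0) 0 \<noteq> 0"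
    using coeff_Q nz pochhammer_1_nonzero by simp
  then have "i \<le> degree Q"
    by (intro le_degree) auto
  have "coeff (coeff (coeff P m) j) k = 0" if "m \<noteq> i" for m
  proof (rule ccontr)
    assume "coeff (coeff (coeff P m) j) k \<noteq> 0"
    then have "m + j + k = d" "i + j + k = d"
      using hom nz unfolding homogeneous3_def by blast+
    with that show False by simp
  qed
  then have "eval3 Q 0 0 1 = (\<Sum>m\<le>degree Q. if m = i then coeff (coeff (coeff Q i) 0) 0 else 0)"
    unfolding eval3_001 by (intro sum.cong) (auto simp: coeff_Q)
  also have "\<dots> = coeff (coeff (coeff Q i) 0) 0"
    using \<open>i \<le> degree Q\<close> by simp
  finally have "eval3 Q 0 0 1 = coeff (coeff (coeff Q i) 0) 0" .
  then show ?thesis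
    using \<open>coeff (coeff (coeff Q i) 0) 0 \<noteq> 0\<close> unfolding Q_def by simp
qed

lemma coeff_coeff_coeff_nonzero:
  fixes P :: tform
  assumes "P \<noteq> 0"
  obtains i j k where "coeff (coeff (coeff P i) j) k \<noteq> 0"
proof -
  obtain i where "coeff P i \<noteq> 0" using assms by (metis leading_coeff_neq_0)
  moreover obtain j where "coeff (coeff P i) j \<noteq> 0" using calculation by (metis leading_coeff_neq_0)
  moreover obtain k where "coeff (coeff (coeff P i) j) k \<noteq> 0" using calculation by (metis leading_coeff_neq_0)
  ultimately show ?thesis using that by blast
qed

lemma curve_mult_001_le:
  assumes "homogeneous3 P d" "coeff (coeff (coeff P i) j) k \<noteq> 0"
  shows "curve_mult P 0 0 1 \<le> j + k"
  unfolding curve_mult_def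
  using eval3_001_derivs_nonzero_if_coeff[OF assms]
  by (intro Least_le exI[of _ k] exI[of _ j] exI[of _ 0]) simp

lemma curve_mult_001_attained:
  assumes hom: "homogeneous3 P d"
  obtains i j k where "coeff (coeff (coeff P i) j) k \<noteq> 0" "j + k = curve_mult P 0 0 1"
proof -
  obtain i j k where nz: "coeff (coeff (coeff P i) j) k \<noteq> 0"
    using hom unfolding homogeneous3_def by (metis coeff_coeff_coeff_nonzero)
  let ?ord = "\<lambda>n. \<exists>a b l. a + b + l = n \<and> eval3 ((dx ^^ a) ((dy ^^ b) ((dz ^^ l) P))) 0 0 1 \<noteq> 0"
  have "?ord (k + j + 0)"
    using eval3_001_derivs_nonzero_if_coeff[OF hom nz] by blast
  then have "?ord (curve_mult P 0 0 1)"
    unfolding curve_mult_def by (rule LeastI)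
  then obtain a b l where "a + b + l = curve_mult P 0 0 1"
    and "eval3 ((dx ^^ a) ((dy ^^ b) ((dz ^^ l) P))) 0 0 1 \<noteq> 0"
    by blast
  moreover obtain i' where "coeff (coeff (coeff P i') b) a \<noteq> 0"
    using coeff_nonzero_if_eval3_001_derivs[OF calculation(2)] by blast
  moreover from this have "curve_mult P 0 0 1 \<le> b + a"
    by (intro curve_mult_001_le[OF hom])
  ultimately show ?thesis using that by simp
qed

text \<open>The multiplicity at \<open>(0:0:1)\<close> is the least total degree in \<open>x, y\<close> of a monomial of \<open>P\<close>,
  so it is complementary to the degree of \<open>P\<close> in \<open>z\<close>.\<close>

lemma degree_eq_minus_curve_mult_001:
  assumes hom: "homogeneous3 P d"
  shows "degree P = d - curve_mult P 0 0 1"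
proof (rule antisym)
  show "degree P \<le> d - curve_mult P 0 0 1"
  proof (rule degree_le, intro allI impI)
    fix i
    assume "d - curve_mult P 0 0 1 < i"
    show "coeff P i = 0"
    proof (rule ccontr)
      assume "coeff P i \<noteq> 0"
      then obtain j where "coeff (coeff P i) j \<noteq> 0" by (metis leading_coeff_neq_0)
      then obtain k where nz: "coeff (coeff (coeff P i) j) k \<noteq> 0" by (metis leading_coeff_neq_0)
      then have "i + j + k = d" using hom unfolding homogeneous3_def by blast
      with curve_mult_001_le[OF hom nz] \<open>d - curve_mult P 0 0 1 < i\<close> show False by linarith
    qed
  qed
  obtain i j k where nz: "coeff (coeff (coeff P i) j) k \<noteq> 0" "j + k = curve_mult P 0 0 1"
    using curve_mult_001_attained[OF hom] by metis
  then have "i = d - curve_mult P 0 0 1"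
    using hom unfolding homogeneous3_def by fastforce
  with nz(1) show "d - curve_mult P 0 0 1 \<le> degree P"
    by (intro le_degree) auto
qed

lemma homogeneous2_coeff:
  assumes "homogeneous3 P d"
  shows "homogeneous2 (coeff P i) (d - i)"
  using assms unfolding homogeneous3_def homogeneous2_def by fastforce

lemma coeff_coeff_formG: "coeff (coeff (formG P) j) k = coeff (coeff (coeff P 1) j) k / 2"
  by (simp add: formG_def coeff_map_poly)

lemma formG_double: "formG P + formG P = coeff P 1"
  by (intro poly_eqI) (simp only: coeff_add coeff_coeff_formG, simp)

lemma homogeneous2_formF: "homogeneous3 P d \<Longrightarrow> homogeneous2 (formF P) (d - 2)"
  unfolding formF_def by (rule homogeneous2_coeff)

lemma homogeneous2_formH: "homogeneous3 P d \<Longrightarrow> homogeneous2 (formH P) d"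
  using homogeneous2_coeff[of P d 0] unfolding formH_def by simp

lemma homogeneous2_formG: "homogeneous3 P d \<Longrightarrow> homogeneous2 (formG P) (d - 1)"
  using homogeneous2_coeff[of P d 1] unfolding homogeneous2_def coeff_coeff_formG by simp

lemma formDelta_eq: "formDelta P = formG P * formG P - formF P * formH P"
  by (simp add: formDelta_def power2_eq_square)

lemma homogeneous2_formDelta:
  assumes "homogeneous3 P d" "2 \<le> d"
  shows "homogeneous2 (formDelta P) (2 * d - 2)"
proof -
  have "d - 1 + (d - 1) = 2 * d - 2" "d - 2 + d = 2 * d - 2"
    using assms(2) by auto
  then have "homogeneous2 (formG P * formG P) (2 * d - 2)"
    and "homogeneous2 (formF P * formH P) (2 * d - 2)"
    using homogeneous2_mult[OF homogeneous2_formG homogeneous2_formG, OF assms(1) assms(1)]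
      homogeneous2_mult[OF homogeneous2_formF homogeneous2_formH, OF assms(1) assms(1)]
    by simp_all
  then show ?thesis
    unfolding formDelta_eq by (rule homogeneous2_diff)
qed

lemma quadratic_tform_eq:
  assumes "degree P \<le> 2"
  shows "P = [:formH P, formG P + formG P, formF P:]"
proof (rule poly_eqI)
  fix n :: nat
  consider "n = 0" | "n = 1" | "n = 2" | "2 < n" by linarith
  then show "coeff P n = coeff [:formH P, formG P + formG P, formF P:] n"
  proof cases
    case 4
    then have "coeff P n = 0"
      using assms by (intro coeff_eq_0) simp
    moreover have "coeff [:formH P, formG P + formG P, formF P:] n = 0"
      using 4 by (intro coeff_eq_0) (simp add: degree_pCons_le)
    ultimately show ?thesis by simp
  qed (simp_all add: formH_def formF_def formG_double numeral_2_eq_2)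
qed

text \<open>If \<open>G\<^sup>2 - F H = D\<^sup>2\<close> then \<open>F (F z\<^sup>2 + 2 G z + H) = (F z + G - D) (F z + G + D)\<close>.\<close>

lemma discriminant_not_square_if_prime:
  fixes F G H D :: "'a::idom"
  assumes prime: "prime_elem [:H, G + G, F:]" and "F \<noteq> 0"
  shows "G * G - F * H \<noteq> D * D"
proof
  assume "G * G - F * H = D * D"
  then have "[:F:] * [:H, G + G, F:] = [:G - D, F:] * [:G + D, F:]"
    by (simp add: algebra_simps)
  then have "[:H, G + G, F:] dvd [:G - D, F:] * [:G + D, F:]"
    by (metis dvd_triv_right)
  then have "[:H, G + G, F:] dvd [:G - D, F:] \<or> [:H, G + G, F:] dvd [:G + D, F:]"
    using prime by (simp only: prime_elem_dvd_mult_iff)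
  moreover have "degree [:G - D, F:] = 1" "degree [:G + D, F:] = 1"
    using \<open>F \<noteq> 0\<close> by simp_all
  ultimately have "degree [:H, G + G, F:] \<le> 1"
    by (metis dvd_imp_degree_le one_neq_zero degree_0)
  then show False
    using \<open>F \<noteq> 0\<close> by simp
qed

lemma irreducible_const_dvd_imp_unit:
  fixes p :: "'a::idom poly"
  assumes "irreducible p" "degree p \<noteq> 0" "[:c:] dvd p"
  shows "c dvd 1"
proof -
  obtain q where q: "p = [:c:] * q" using assms(3) by (rule dvdE)
  have "\<not> q dvd 1"
  proof
    assume "q dvd 1"
    then have "degree q = 0"
      by (metis is_unit_poly_iff degree_pCons_0)
    then show False
      using assms(2) q degree_mult_le[of "[:c:]" q] by simp
  qed
  then have "[:c:] dvd 1"
    using assms(1) q irreducibleD by blast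
  then show ?thesis by (simp add: is_unit_const_poly_iff)
qed

lemma linform_not_dvd_coeffs_if_irreducible:
  assumes "irreducible [:H, G + G, F:]" "F \<noteq> 0"
  shows "\<not> (linform t dvd F \<and> linform t dvd G \<and> linform t dvd H)"
proof
  assume "linform t dvd F \<and> linform t dvd G \<and> linform t dvd H"
  then have "[:linform t:] dvd [:H, G + G, F:]"
    unfolding const_poly_dvd_iff by (auto simp: coeff_pCons split: nat.split)
  then have "linform t dvd 1"
    using irreducible_const_dvd_imp_unit[OF assms(1)] assms(2) by simp
  then show False
    using linform_not_dvd_1 by blast
qed

theorem lemma1:
  fixes P :: tform and d :: nat
  assumes hom: "homogeneous3 P d"
    and irr: "irreducible P"
    and Qsing: "2 \<le> curve_mult P 0 0 1"
    and Qmult: "curve_mult P 0 0 1 = d - 2"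
    and type: "\<forall>a b c. (a, b, c) \<noteq> (0, 0, 0) \<and> 2 \<le> curve_mult P a b c
                 \<longrightarrow> curve_mult P a b c \<le> d - 2"
  shows "((\<Sum>t\<in>roots2 P. ordP1 t (formDelta P)) = 2 * (\<Sum>t\<in>roots2 P. ordP1 t (formF P)) + 2)
    \<and> (\<forall>t\<in>roots2 P. ordP1 t (formF P) = ordP1 t (formDelta P)
            \<or> even (min (ordP1 t (formF P)) (ordP1 t (formDelta P))))
    \<and> (\<exists>t\<in>roots2 P. odd (ordP1 t (formDelta P)))"
proof -
  let ?F = "formF P" and ?G = "formG P" and ?H = "formH P" and ?\<Delta> = "formDelta P"
  have "4 \<le> d" using Qsing Qmult by linarith
  have "degree P = 2"
    using degree_eq_minus_curve_mult_001[OF hom] Qmult \<open>4 \<le> d\<close> by simp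
  then have P: "P = [:?H, ?G + ?G, ?F:]"
    by (intro quadratic_tform_eq) simp
  have "?F \<noteq> 0"
    using \<open>degree P = 2\<close> unfolding formF_def by (metis degree_0 leading_coeff_0_iff zero_neq_numeral)
  have hF: "homogeneous2 ?F (d - 2)" and hG: "homogeneous2 ?G (d - 1)"
    and hH: "homogeneous2 ?H d" and h\<Delta>: "homogeneous2 ?\<Delta> (2 * d - 2)"
    using homogeneous2_formF[OF hom] homogeneous2_formG[OF hom] homogeneous2_formH[OF hom]
      homogeneous2_formDelta[OF hom] \<open>4 \<le> d\<close> by simp_all
  have "prime_elem P"
    using irr by (simp only: prime_elem_iff_irreducible)
  then have not_square: "?\<Delta> \<noteq> D * D" for D
    unfolding formDelta_eq
    using discriminant_not_square_if_prime[of ?H ?G ?F, folded P] \<open>?F \<noteq> 0\<close> by blast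
  then have "?\<Delta> \<noteq> 0" by (metis mult_zero_left)
  have roots: "roots2 P = {t. 0 < ordP1 t ?F} \<union> {t. 0 < ordP1 t ?\<Delta>}"
    unfolding roots2_def ordP1_mult[OF hF \<open>?F \<noteq> 0\<close> h\<Delta> \<open>?\<Delta> \<noteq> 0\<close>] by auto
  then have "finite (roots2 P)"
    using finite_ordP1_support[OF hF \<open>?F \<noteq> 0\<close>] finite_ordP1_support[OF h\<Delta> \<open>?\<Delta> \<noteq> 0\<close>] by simp
  then have "(\<Sum>t\<in>roots2 P. ordP1 t ?\<Delta>) = 2 * d - 2" "(\<Sum>t\<in>roots2 P. ordP1 t ?F) = d - 2"
    using sum_ordP1_eq_degree[OF h\<Delta> \<open>?\<Delta> \<noteq> 0\<close>] sum_ordP1_eq_degree[OF hF \<open>?F \<noteq> 0\<close>] roots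
    by auto
  moreover have "ordP1 t ?F = ordP1 t ?\<Delta> \<or> even (min (ordP1 t ?F) (ordP1 t ?\<Delta>))" for t
    using ordP1_discriminant[OF hF hG hH _ \<open>?F \<noteq> 0\<close>] \<open>?\<Delta> \<noteq> 0\<close> \<open>4 \<le> d\<close>
      linform_not_dvd_coeffs_if_irreducible[of ?H ?G ?F, folded P, OF irr \<open>?F \<noteq> 0\<close>]
    unfolding formDelta_eq by simp
  moreover have "\<exists>t\<in>roots2 P. odd (ordP1 t ?\<Delta>)"
  proof (rule ccontr)
    assume "\<not> ?thesis"
    then have "even (ordP1 t ?\<Delta>)" for t by (cases "t \<in> roots2 P") (auto simp: roots)
    then show False
      using homogeneous2_square_if_even_ordP1[OF h\<Delta> \<open>?\<Delta> \<noteq> 0\<close>] not_square by metis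
  qed
  ultimately show ?thesis
    using \<open>4 \<le> d\<close> by auto
qed

end
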